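(* Let $p$ be a prime, $n\ge2$, $m_1,\dots,m_n\ge2$, and $\ell_k,r_k\in\mathbb{Z}_p$. Let $\mathbb{E}$ be the splitting field over $\mathbb{Z}_p$ of the polynomials $g_{m_k;\ell_k,r_k}$ mod $p$, $1\le k\le n$. For each $k$ let $U_k\in GL_{m_k}(\mathbb{E})$ be such that $J_k:=U_k^{-1}S_{m_k}(\ell_k,r_k)U_k$ is a canonical (upper triangular) Jordan form over $\mathbb{E}$, and put $U_{T_n}=U_n\otimes U_{n-1}\otimes\cdots\otimes U_1$. Then $U_{T_n}$ is invertible and $$ U_{T_n}^{-1}T_nU_{T_n}=\widetilde J_n,\qquad\text{where }\widetilde J_1=J_1,\ \widetilde J_k=I_{m_k}\otimes\widetilde J_{k-1}+J_k\otimes I_{m_1\cdots m_{k-1}}\ (2\le k\le n), $$ which is an upper triangular (generalized Jordan) matrix. Moreover, $\widetilde J_n$ is a canonical Jordan form if and only if $S_{m_k}(\ell_k,r_k)$ is diagonalizable over $\mathbb{E}$ for every $k\ge2$, and $T_n$ is diagonalizable over $\mathbb{E}$ if and only if $S_{m_k}(\ell_k,r_k)$ is diagonalizable over $\mathbb{E}$ for every $1\le k\le n$.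
   Context: For $k\ge1$ and $t_1,t_2\in\mathbb{Z}_p$, $S_k(t_1,t_2)$ is the $k\times k$ tridiagonal matrix with zeros on the main diagonal, every subdiagonal entry (positions $(i+1,i)$) equal to $t_1$, and every superdiagonal entry (positions $(i,i+1)$) equal to $t_2$. $I_r$ is the $r\times r$ identity, $\otimes$ the Kronecker product. $T_1=S_{m_1}(\ell_1,r_1)$ and $T_k=I_{m_k}\otimes T_{k-1}+S_{m_k}(\ell_k,r_k)\otimes I_{m_1\cdots m_{k-1}}$ for $2\le k\le n$. For $j\ge0$, $g_{j;t_1,t_2}(x)=\sum_{i=0}^{\lfloor j/2\rfloor}(-1)^i(t_1t_2)^i\binom{j-i}{i}x^{j-2i}$ (the characteristic polynomial of $S_j(t_1,t_2)$). A canonical Jordan form is a block diagonal matrix of Jordan blocks, each having a single eigenvalue on its diagonal, $1$'s on its superdiagonal and zeros elsewhere. *)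

theory Defs
  imports "Jordan_Normal_Form.Jordan_Normal_Form"
          "Jordan_Normal_Form.Gauss_Jordan_Elimination"
          "HOL-Computational_Algebra.Polynomial"
          "HOL-Computational_Algebra.Primes"
begin

definition kron :: "'a::semiring_1 mat \<Rightarrow> 'a mat \<Rightarrow> 'a mat" where
  "kron A B = mat (dim_row A * dim_row B) (dim_col A * dim_col B)
     (\<lambda>(i,j). A $$ (i div dim_row B, j div dim_col B) * B $$ (i mod dim_row B, j mod dim_col B))"

text \<open>Matrix inverse (meaningful for invertible square matrices).\<close>
definition minv :: "'a::field mat \<Rightarrow> 'a mat" where
  "minv A = the (mat_inverse A)"

definition Smat :: "nat \<Rightarrow> 'a::semiring_1 \<Rightarrow> 'a \<Rightarrow> 'a mat" where
  "Smat k t1 t2 = mat k k (\<lambda>(i,j). if i = j + 1 then t1 else if j = i + 1 then t2 else 0)"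

fun ksum :: "(nat \<Rightarrow> 'a::semiring_1 mat) \<Rightarrow> (nat \<Rightarrow> nat) \<Rightarrow> nat \<Rightarrow> 'a mat" where
  "ksum A m 0 = 1\<^sub>m 1"
| "ksum A m (Suc 0) = A 1"
| "ksum A m (Suc (Suc k)) =
     kron (1\<^sub>m (m (Suc (Suc k)))) (ksum A m (Suc k))
     + kron (A (Suc (Suc k))) (1\<^sub>m (\<Prod>i\<in>{1..Suc k}. m i))"

fun kprod :: "(nat \<Rightarrow> 'a::semiring_1 mat) \<Rightarrow> nat \<Rightarrow> 'a mat" where
  "kprod U 0 = 1\<^sub>m 1"
| "kprod U (Suc 0) = U 1"
| "kprod U (Suc (Suc k)) = kron (U (Suc (Suc k))) (kprod U (Suc k))"

definition gpoly :: "nat \<Rightarrow> 'a::comm_ring_1 \<Rightarrow> 'a \<Rightarrow> 'a poly" where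
  "gpoly j t1 t2 = (\<Sum>i = 0..j div 2.
       monom ((-1)^i * (t1 * t2)^i * of_nat ((j - i) choose i)) (j - 2 * i))"

definition splits :: "'a::field poly \<Rightarrow> bool" where
  "splits f \<longleftrightarrow> (\<exists>c as. f = Polynomial.smult c (\<Prod>a\<leftarrow>as. [:- a, 1:]))"

definition gen_subfield :: "'a::field set \<Rightarrow> 'a set" where
  "gen_subfield S = \<Inter> {F. S \<subseteq> F \<and> 0 \<in> F \<and> 1 \<in> F
      \<and> (\<forall>x\<in>F. \<forall>y\<in>F. x + y \<in> F \<and> x * y \<in> F)
      \<and> (\<forall>x\<in>F. - x \<in> F \<and> inverse x \<in> F)}"

text \<open>The field type 'a is a splitting field of the family of polynomials fs over its prime field.\<close>
definition is_splitting_field :: "'a::field poly set \<Rightarrow> bool" where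
  "is_splitting_field fs \<longleftrightarrow> (\<forall>f\<in>fs. splits f)
      \<and> gen_subfield {x. \<exists>f\<in>fs. poly f x = 0} = UNIV"

definition diagonalizable :: "'a::field mat \<Rightarrow> bool" where
  "diagonalizable A \<longleftrightarrow> (\<exists>D. diagonal_mat D \<and> similar_mat A D)"

definition canonical_jordan :: "'a::{zero,one} mat \<Rightarrow> bool" where
  "canonical_jordan J \<longleftrightarrow> (\<exists>n_as. J = jordan_matrix n_as)"

end

theory Submission
  imports Defs "Jordan_Normal_Form.Jordan_Normal_Form_Uniqueness"
begin

text \<open>Conjugation by the Kronecker product \<open>U\<^sub>n \<otimes> \<cdots> \<otimes> U\<^sub>1\<close> acts factor by factor on
  the iterated Kronecker sum, so it turns \<open>T\<^sub>n\<close> into the iterated Kronecker sum of the Jordan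
  forms \<open>J\<^sub>k\<close>. A Kronecker sum \<open>I\<^sub>m \<otimes> A + B \<otimes> I\<^sub>M\<close> of upper triangular matrices is upper
  triangular, and for \<open>M \<ge> 2\<close> it has the entry pattern of a Jordan matrix exactly when \<open>A\<close> has
  it and \<open>B\<close> is diagonal, because an off-diagonal entry of \<open>B\<close> lands a multiple of \<open>M\<close> away from
  the diagonal. Finally, a matrix \<open>X\<close> with \<open>(X - \<mu>)\<^sup>2 w = 0 \<noteq> (X - \<mu>) w\<close> for some \<open>\<mu>\<close> and
  \<open>w\<close> is not diagonalizable; every non-diagonal Jordan matrix has such a \<open>w\<close>, and it lifts from
  either summand to a Kronecker sum with an upper triangular matrix.\<close>

section \<open>Kronecker products\<close>

lemma sum_lessThan_mult_div_mod:
  "(\<Sum>t<m * n. g (t div n) (t mod n)) = (\<Sum>i<m. \<Sum>j<(n::nat). g i j)"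
proof -
  have "(\<Sum>t<m * n. g (t div n) (t mod n))
      = (\<Sum>u<m. \<Sum>t\<in>{u * n..<u * n + n}. g (t div n) (t mod n))"
    by (rule sum.nat_group[symmetric])
  also have "\<dots> = (\<Sum>u<m. \<Sum>v<n. g u v)"
  proof (rule sum.cong[OF refl])
    fix u
    have "(\<Sum>t\<in>{u * n..<u * n + n}. g (t div n) (t mod n))
        = (\<Sum>v\<in>{0..<n}. g ((u * n + v) div n) ((u * n + v) mod n))"
      using sum.atLeastLessThan_shift_bounds[of "\<lambda>t. g (t div n) (t mod n)" 0 "u * n" n]
      by (simp add: add.commute comp_def)
    also have "\<dots> = (\<Sum>v<n. g u v)"
      by (rule sum.cong) auto
    finally show "(\<Sum>t\<in>{u * n..<u * n + n}. g (t div n) (t mod n)) = (\<Sum>v<n. g u v)" .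
  qed
  finally show ?thesis .
qed

lemma less_mult_imp_mod_less: "i < a * c \<Longrightarrow> i mod c < (c::nat)"
  by (metis mod_less_divisor mult_zero_right not_less_zero zero_less_iff_neq_zero)

lemma nat_eq_iff_div_mod_eq: "(i::nat) = j \<longleftrightarrow> i div c = j div c \<and> i mod c = j mod c"
  by (metis div_mult_mod_eq)

lemma mult_add_less_mult: "i < a \<Longrightarrow> k < c \<Longrightarrow> i * c + k < a * (c::nat)"
proof -
  assume "i < a" "k < c"
  then have "i * c + k < Suc i * c" by simp
  also have "\<dots> \<le> a * c" using \<open>i < a\<close> by (intro mult_le_mono1) simp
  finally show ?thesis .
qed

lemma dim_kron [simp]:
  "dim_row (kron A B) = dim_row A * dim_row B" "dim_col (kron A B) = dim_col A * dim_col B"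
  unfolding kron_def by simp_all

lemma kron_carrier:
  "A \<in> carrier_mat a b \<Longrightarrow> B \<in> carrier_mat c d \<Longrightarrow> kron A B \<in> carrier_mat (a * c) (b * d)"
  unfolding kron_def by auto

lemma index_kron:
  assumes "A \<in> carrier_mat a b" "B \<in> carrier_mat c d" "i < a * c" "j < b * d"
  shows "kron A B $$ (i, j) = A $$ (i div c, j div d) * B $$ (i mod c, j mod d)"
  using assms unfolding kron_def by auto

lemma kron_mult:
  fixes A :: "'a::comm_semiring_1 mat"
  assumes A: "A \<in> carrier_mat a b" and B: "B \<in> carrier_mat c d"
    and C: "C \<in> carrier_mat b e" and D: "D \<in> carrier_mat d f"
  shows "kron A B * kron C D = kron (A * C) (B * D)"
proof (rule eq_matI)
  fix i j assume "i < dim_row (kron (A * C) (B * D))" "j < dim_col (kron (A * C) (B * D))"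
  then have i: "i < a * c" and j: "j < e * f" using A B C D by auto
  have "(kron A B * kron C D) $$ (i, j) = (\<Sum>t<b * d. kron A B $$ (i, t) * kron C D $$ (t, j))"
    using i j A B C D by (simp add: kron_def scalar_prod_def atLeast0LessThan)
  also have "\<dots> = (\<Sum>u<b. \<Sum>v<d. A $$ (i div c, u) * C $$ (u, j div f)
      * (B $$ (i mod c, v) * D $$ (v, j mod f)))"
    using sum_lessThan_mult_div_mod[where g = "\<lambda>u v. A $$ (i div c, u) * C $$ (u, j div f)
      * (B $$ (i mod c, v) * D $$ (v, j mod f))" and m = b and n = d, symmetric] A B C D i j
    by (auto intro!: sum.cong simp: index_kron less_mult_imp_div_less less_mult_imp_mod_less ac_simps)
  also have "\<dots> = (\<Sum>u<b. A $$ (i div c, u) * C $$ (u, j div f))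
      * (\<Sum>v<d. B $$ (i mod c, v) * D $$ (v, j mod f))"
    by (simp add: sum_product)
  also have "\<dots> = kron (A * C) (B * D) $$ (i, j)"
    using i j A B C D less_mult_imp_div_less[OF i] less_mult_imp_mod_less[OF i]
      less_mult_imp_div_less[OF j] less_mult_imp_mod_less[OF j]
    by (simp add: kron_def scalar_prod_def atLeast0LessThan)
  finally show "(kron A B * kron C D) $$ (i, j) = kron (A * C) (B * D) $$ (i, j)" .
qed (use A B C D in auto)

lemma kron_one: "kron (1\<^sub>m a) (1\<^sub>m b) = (1\<^sub>m (a * b) :: 'a::semiring_1 mat)"
proof (rule eq_matI)
  fix i j assume "i < dim_row (1\<^sub>m (a * b) :: 'a mat)" "j < dim_col (1\<^sub>m (a * b) :: 'a mat)"
  then have i: "i < a * b" and j: "j < a * b" by auto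
  then show "kron (1\<^sub>m a) (1\<^sub>m b) $$ (i, j) = (1\<^sub>m (a * b) :: 'a mat) $$ (i, j)"
    using less_mult_imp_div_less[OF i] less_mult_imp_mod_less[OF i]
      less_mult_imp_div_less[OF j] less_mult_imp_mod_less[OF j]
    by (auto simp: kron_def nat_eq_iff_div_mod_eq[of i j b])
qed (auto simp: kron_def)

lemma kron_eq_zero_iff:
  fixes A :: "'a::{semiring_1,semiring_no_zero_divisors} mat"
  assumes A: "A \<in> carrier_mat a b" and B: "B \<in> carrier_mat c d"
  shows "kron A B = 0\<^sub>m (a * c) (b * d) \<longleftrightarrow> A = 0\<^sub>m a b \<or> B = 0\<^sub>m c d"
proof
  assume AB: "kron A B = 0\<^sub>m (a * c) (b * d)"
  show "A = 0\<^sub>m a b \<or> B = 0\<^sub>m c d"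
  proof (rule ccontr)
    assume "\<not> ?thesis"
    then obtain i j k l where ij: "i < a" "j < b" "A $$ (i, j) \<noteq> 0"
      and kl: "k < c" "l < d" "B $$ (k, l) \<noteq> 0"
      using A B by (metis carrier_matD eq_matI index_zero_mat)
    have "i * c + k < a * c" "j * d + l < b * d"
      using ij kl by (simp_all add: mult_add_less_mult)
    then have "kron A B $$ (i * c + k, j * d + l) = A $$ (i, j) * B $$ (k, l)"
      using A B kl by (simp add: index_kron)
    with AB ij kl \<open>i * c + k < a * c\<close> \<open>j * d + l < b * d\<close> show False by simp
  qed
next
  assume zero: "A = 0\<^sub>m a b \<or> B = 0\<^sub>m c d"
  have "kron A B $$ (i, j) = 0" if "i < a * c" "j < b * d" for i j
    using zero index_kron[OF A B that] less_mult_imp_div_less[OF that(1)] less_mult_imp_div_less[OF that(2)]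
      less_mult_imp_mod_less[OF that(1)] less_mult_imp_mod_less[OF that(2)]
    by auto
  then show "kron A B = 0\<^sub>m (a * c) (b * d)"
    using kron_carrier[OF A B] by (intro eq_matI) auto
qed

section \<open>Kronecker sums\<close>

definition kron_sum :: "'a::semiring_1 mat \<Rightarrow> 'a mat \<Rightarrow> 'a mat" where
  "kron_sum A B = kron (1\<^sub>m (dim_row B)) A + kron B (1\<^sub>m (dim_row A))"

lemma dim_kron_sum [simp]:
  "dim_row (kron_sum A B) = dim_row B * dim_row A"
  "dim_col (kron_sum A B) = dim_col B * dim_row A"
  unfolding kron_sum_def by simp_all

lemma kron_sum_unfold:
  "A \<in> carrier_mat M M \<Longrightarrow> B \<in> carrier_mat m m \<Longrightarrow>
   kron_sum A B = kron (1\<^sub>m m) A + kron B (1\<^sub>m M)"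
  unfolding kron_sum_def by auto

lemma kron_sum_carrier:
  "A \<in> carrier_mat M M \<Longrightarrow> B \<in> carrier_mat m m \<Longrightarrow>
   kron_sum A B \<in> carrier_mat (m * M) (m * M)"
  by (auto simp: kron_sum_unfold)

lemma index_kron_sum:
  assumes A: "A \<in> carrier_mat M M" and B: "B \<in> carrier_mat m m"
    and i: "i < m * M" and j: "j < m * M"
  shows "kron_sum A B $$ (i, j) = (if i div M = j div M then A $$ (i mod M, j mod M) else 0)
     + B $$ (i div M, j div M) * (if i mod M = j mod M then 1 else 0)"
  using A B i j less_mult_imp_div_less[OF i] less_mult_imp_div_less[OF j]
    less_mult_imp_mod_less[OF i] less_mult_imp_mod_less[OF j]
  by (simp add: kron_sum_unfold index_kron[OF one_carrier_mat A]
      index_kron[OF B one_carrier_mat])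

lemma kron_sum_mult_kron:
  fixes A :: "'a::comm_semiring_1 mat"
  assumes A: "A \<in> carrier_mat M M" and B: "B \<in> carrier_mat m m"
    and X: "X \<in> carrier_mat m a" and Y: "Y \<in> carrier_mat M b"
  shows "kron_sum A B * kron X Y = kron X (A * Y) + kron (B * X) Y"
proof -
  have "kron_sum A B * kron X Y = kron (1\<^sub>m m) A * kron X Y + kron B (1\<^sub>m M) * kron X Y"
    unfolding kron_sum_unfold[OF A B]
    by (rule add_mult_distrib_mat[OF kron_carrier kron_carrier kron_carrier]) (use A B X Y in auto)
  also have "\<dots> = kron X (A * Y) + kron (B * X) Y"
    using X Y by (simp add: kron_mult[OF one_carrier_mat A X Y] kron_mult[OF B one_carrier_mat X Y])
  finally show ?thesis .
qed

lemma kron_sum_conj: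
  fixes A :: "'a::comm_semiring_1 mat"
  assumes A: "A \<in> carrier_mat M M" and P: "P \<in> carrier_mat M M" and Q: "Q \<in> carrier_mat M M"
    and B: "B \<in> carrier_mat m m" and u: "u \<in> carrier_mat m m" and v: "v \<in> carrier_mat m m"
    and QP: "Q * P = 1\<^sub>m M" and vu: "v * u = 1\<^sub>m m"
  shows "kron v Q * kron_sum A B * kron u P = kron_sum (Q * A * P) (v * B * u)"
proof -
  have "kron v Q * kron_sum A B * kron u P = kron v Q * (kron u (A * P) + kron (B * u) P)"
    using assoc_mult_mat[OF kron_carrier[OF v Q] kron_sum_carrier[OF A B] kron_carrier[OF u P]]
    by (simp add: kron_sum_mult_kron[OF A B u P])
  also have "\<dots> = kron v Q * kron u (A * P) + kron v Q * kron (B * u) P"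
    by (rule mult_add_distrib_mat[OF kron_carrier kron_carrier kron_carrier]) (use A B P Q u v in auto)
  also have "\<dots> = kron (v * u) (Q * (A * P)) + kron (v * (B * u)) (Q * P)"
    using A B P Q u v by (simp add: kron_mult[of _ m m _ M M _ m _ M])
  also have "\<dots> = kron (1\<^sub>m m) (Q * A * P) + kron (v * B * u) (1\<^sub>m M)"
    using A B P Q u v
    by (simp add: QP vu assoc_mult_mat[of _ m m _ m _ m] assoc_mult_mat[of _ M M _ M _ M])
  also have "\<dots> = kron_sum (Q * A * P) (v * B * u)"
    by (rule kron_sum_unfold[symmetric]) (use A B P Q u v in auto)
  finally show ?thesis .
qed

lemma index_char_matrix:
  "A \<in> carrier_mat n n \<Longrightarrow> i < n \<Longrightarrow> j < n \<Longrightarrow>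
   char_matrix A e $$ (i, j) = A $$ (i, j) - (if i = j then e else 0)"
  unfolding char_matrix_def by auto

lemma char_matrix_kron_sum:
  fixes A :: "'a::field mat"
  assumes A: "A \<in> carrier_mat M M" and B: "B \<in> carrier_mat m m"
  shows "char_matrix (kron_sum A B) (a + b) = kron_sum (char_matrix A a) (char_matrix B b)"
proof (rule eq_matI)
  fix i j assume "i < dim_row (kron_sum (char_matrix A a) (char_matrix B b))"
    "j < dim_col (kron_sum (char_matrix A a) (char_matrix B b))"
  then have i: "i < m * M" and j: "j < m * M"
    using A B by (simp_all add: char_matrix_def)
  show "char_matrix (kron_sum A B) (a + b) $$ (i, j)
    = kron_sum (char_matrix A a) (char_matrix B b) $$ (i, j)"
    unfolding index_char_matrix[OF kron_sum_carrier[OF A B] i j] index_kron_sum[OF A B i j]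
      index_kron_sum[OF char_matrix_closed[OF A] char_matrix_closed[OF B] i j]
      index_char_matrix[OF A less_mult_imp_mod_less[OF i] less_mult_imp_mod_less[OF j]]
      index_char_matrix[OF B less_mult_imp_div_less[OF i] less_mult_imp_div_less[OF j]]
      nat_eq_iff_div_mod_eq[of i j M]
    by (cases "i div M = j div M"; cases "i mod M = j mod M") (simp_all add: algebra_simps)
qed (use A B in \<open>simp_all add: char_matrix_def\<close>)

lemma upper_triangular_kron_sum:
  assumes A: "A \<in> carrier_mat M M" and B: "B \<in> carrier_mat m m"
    and "upper_triangular A" "upper_triangular B"
  shows "upper_triangular (kron_sum A B)"
proof
  fix i j assume ji: "j < i" and "i < dim_row (kron_sum A B)"
  then have i: "i < m * M" and j: "j < m * M" using A B by simp_all
  have "j div M \<le> i div M" using ji by (simp add: div_le_mono)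
  then consider (same_block) "i div M = j div M" | (lower_block) "j div M < i div M" by linarith
  then show "kron_sum A B $$ (i, j) = 0"
  proof cases
    case same_block
    then have "j = i div M * M + j mod M" using div_mult_mod_eq[of j M] by simp
    then have "j mod M < i mod M" using ji div_mult_mod_eq[of i M] by linarith
    then show ?thesis
      using same_block assms less_mult_imp_mod_less[OF i]
      by (auto simp: index_kron_sum[OF A B i j])
  next
    case lower_block
    then show ?thesis
      using assms less_mult_imp_div_less[OF i] by (auto simp: index_kron_sum[OF A B i j])
  qed
qed

lemma diagonal_kron_sum:
  assumes A: "A \<in> carrier_mat M M" and B: "B \<in> carrier_mat m m"
    and "diagonal_mat A" "diagonal_mat B"
  shows "diagonal_mat (kron_sum A B)"
  unfolding diagonal_mat_def
proof (intro allI impI)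
  fix i j assume "i < dim_row (kron_sum A B)" "j < dim_col (kron_sum A B)" and ij: "i \<noteq> j"
  then have i: "i < m * M" and j: "j < m * M" using A B by simp_all
  show "kron_sum A B $$ (i, j) = 0"
    using assms ij nat_eq_iff_div_mod_eq[of i j M]
      less_mult_imp_div_less[OF i] less_mult_imp_mod_less[OF i]
      less_mult_imp_div_less[OF j] less_mult_imp_mod_less[OF j]
    by (auto simp: index_kron_sum[OF A B i j] diagonal_mat_def)
qed

section \<open>The entry pattern of Jordan matrices\<close>

definition jordan_pattern :: "'a::{zero,one} mat \<Rightarrow> bool" where
  "jordan_pattern J \<longleftrightarrow> (\<forall>i<dim_row J. \<forall>j<dim_row J. J $$ (i, j) \<noteq> 0 \<longrightarrow>
     j = i \<or> (j = Suc i \<and> J $$ (i, j) = 1 \<and> J $$ (i, i) = J $$ (j, j)))"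

lemma jordan_patternD:
  "jordan_pattern J \<Longrightarrow> i < dim_row J \<Longrightarrow> j < dim_row J \<Longrightarrow> J $$ (i, j) \<noteq> 0 \<Longrightarrow>
   j = i \<or> (j = Suc i \<and> J $$ (i, j) = 1 \<and> J $$ (i, i) = J $$ (j, j))"
  unfolding jordan_pattern_def by blast

lemma jordan_pattern_upper_triangular:
  assumes "jordan_pattern J"
  shows "upper_triangular J"
proof (rule upper_triangularI)
  fix i j assume "j < i" "i < dim_row J"
  then show "J $$ (i, j) = 0" using jordan_patternD[OF assms, of i j] by auto
qed

lemma jordan_pattern_jordan_block: "jordan_pattern (jordan_block n a)"
  unfolding jordan_pattern_def by auto

lemma jordan_pattern_four_block:
  assumes A: "A \<in> carrier_mat k k" and D: "D \<in> carrier_mat l l"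
    and "jordan_pattern A" "jordan_pattern D"
  shows "jordan_pattern (four_block_mat A (0\<^sub>m k l) (0\<^sub>m l k) D)"
  unfolding jordan_pattern_def
proof (intro allI impI)
  fix i j
  let ?J = "four_block_mat A (0\<^sub>m k l) (0\<^sub>m l k) D"
  assume "i < dim_row ?J" "j < dim_row ?J" "?J $$ (i, j) \<noteq> 0"
  then have i: "i < k + l" and j: "j < k + l"
    and nz: "if i < k then j < k \<and> A $$ (i, j) \<noteq> 0 else k \<le> j \<and> D $$ (i - k, j - k) \<noteq> 0"
    using A D by (auto split: if_splits)
  show "j = i \<or> (j = Suc i \<and> ?J $$ (i, j) = 1 \<and> ?J $$ (i, i) = ?J $$ (j, j))"
  proof (cases "i < k")
    case True
    with nz jordan_patternD[of A i j] assms show ?thesis by auto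
  next
    case False
    with nz i j have "i - k < l" "j - k < l" "k \<le> i" "k \<le> j" "D $$ (i - k, j - k) \<noteq> 0" by auto
    with jordan_patternD[of D "i - k" "j - k"] assms show ?thesis by auto
  qed
qed

lemma jordan_pattern_jordan_matrix: "jordan_pattern (jordan_matrix n_as)"
proof (induction n_as)
  case Nil
  show ?case unfolding jordan_pattern_def by simp
next
  case (Cons na n_as)
  then show ?case
    by (cases na) (simp add: jordan_matrix_Cons jordan_pattern_four_block jordan_pattern_jordan_block)
qed

lemma jordan_pattern_lower_right:
  assumes J: "J \<in> carrier_mat n n" and pat: "jordan_pattern J"
  shows "jordan_pattern (mat (n - k) (n - k) (\<lambda>(i, j). J $$ (i + k, j + k)))"
  unfolding jordan_pattern_def
proof (intro allI impI)
  fix i j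
  let ?J' = "mat (n - k) (n - k) (\<lambda>(i, j). J $$ (i + k, j + k))"
  assume "i < dim_row ?J'" "j < dim_row ?J'" "?J' $$ (i, j) \<noteq> 0"
  then have "i + k < n" "j + k < n" "J $$ (i + k, j + k) \<noteq> 0" by auto
  with jordan_patternD[OF pat, of "i + k" "j + k"] J
  show "j = i \<or> (j = Suc i \<and> ?J' $$ (i, j) = 1 \<and> ?J' $$ (i, i) = ?J' $$ (j, j))" by auto
qed

lemma jordan_pattern_leading_block:
  assumes J: "J \<in> carrier_mat n n" and pat: "jordan_pattern J" and k: "0 < k" "k \<le> n"
    and chain: "\<And>i. Suc i < k \<Longrightarrow> J $$ (i, Suc i) \<noteq> 0"
    and last: "k < n \<Longrightarrow> J $$ (k - 1, k) = 0"
  shows "J = four_block_mat (jordan_block k (J $$ (0, 0))) (0\<^sub>m k (n - k)) (0\<^sub>m (n - k) k)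
    (mat (n - k) (n - k) (\<lambda>(i, j). J $$ (i + k, j + k)))"
proof -
  have step: "J $$ (i, Suc i) = 1 \<and> J $$ (i, i) = J $$ (Suc i, Suc i)" if "Suc i < k" for i
    using jordan_patternD[OF pat _ _ chain[OF that]] that k J by auto
  have diag: "J $$ (i, i) = J $$ (0, 0)" if "i < k" for i
    using that
  proof (induction i)
    case (Suc i)
    then have "J $$ (Suc i, Suc i) = J $$ (i, i)" using step[of i] by simp
    with Suc show ?case by simp
  qed simp
  have far: "J $$ (i, j) = 0" if "i < n" "j < n" "j \<noteq> i" "j \<noteq> Suc i" for i j
    using jordan_patternD[OF pat, of i j] that J by auto
  have lower: "J $$ (i, j) = 0" if "i < n" "j < i" for i j
    using jordan_pattern_upper_triangular[OF pat] that J by auto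
  show ?thesis (is "J = ?F")
  proof (rule eq_matI)
    fix i j assume "i < dim_row ?F" "j < dim_col ?F"
    then have i: "i < n" and j: "j < n" using k by auto
    consider "i < k" "j < k" | "i < k" "k \<le> j" | "k \<le> i" "j < k" | "k \<le> i" "k \<le> j" by linarith
    then show "J $$ (i, j) = ?F $$ (i, j)"
    proof cases
      case 1
      then have "J $$ (i, j) = (if i = j then J $$ (0, 0) else if Suc i = j then 1 else 0)"
        using diag[of i] step[of i, THEN conjunct1] far[OF i j] by auto
      with 1 show ?thesis using k by simp
    next
      case 2
      have "J $$ (i, j) = 0"
      proof (cases "j = Suc i")
        case True
        with 2 have "i = k - 1" "j = k" by auto
        with last j show ?thesis by auto
      qed (use far i j 2 in auto)
      then show ?thesis using 2 i j k by auto
    next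
      case 3
      then show ?thesis using i j k lower by auto
    qed (use i j k in auto)
  qed (use J k in auto)
qed

lemma jordan_pattern_imp_jordan_matrix:
  "J \<in> carrier_mat n n \<Longrightarrow> jordan_pattern J \<Longrightarrow> \<exists>n_as. J = jordan_matrix n_as"
proof (induction n arbitrary: J rule: less_induct)
  case (less n)
  show ?case
  proof (cases "n = 0")
    case True
    then have "J = jordan_matrix []" using less.prems by (intro eq_matI) auto
    then show ?thesis ..
  next
    case False
    define P where "P = (\<lambda>k. 0 < k \<and> (k = n \<or> J $$ (k - 1, k) = 0))"
    have "P n" using False unfolding P_def by simp
    define k where "k = (LEAST k. P k)"
    have "P k" "k \<le> n"
      using LeastI[of P, OF \<open>P n\<close>] Least_le[of P, OF \<open>P n\<close>] unfolding k_def by auto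
    have chain: "J $$ (i, Suc i) \<noteq> 0" if "Suc i < k" for i
      using not_less_Least[of "Suc i" P] that \<open>k \<le> n\<close> unfolding k_def P_def by auto
    define J' where "J' = mat (n - k) (n - k) (\<lambda>(i, j). J $$ (i + k, j + k))"
    have "n - k < n" using \<open>P k\<close> False unfolding P_def by auto
    moreover have "J' \<in> carrier_mat (n - k) (n - k)" "jordan_pattern J'"
      unfolding J'_def using jordan_pattern_lower_right[OF less.prems] by auto
    ultimately obtain n_as where J': "J' = jordan_matrix n_as"
      using less.IH by blast
    have dim: "sum_list (map fst n_as) = n - k"
      using arg_cong[OF J', of dim_row] unfolding J'_def by simp
    have k0: "0 < k" and last: "k < n \<Longrightarrow> J $$ (k - 1, k) = 0"
      using \<open>P k\<close> unfolding P_def by auto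
    have "J = four_block_mat (jordan_block k (J $$ (0, 0))) (0\<^sub>m k (n - k)) (0\<^sub>m (n - k) k) J'"
      unfolding J'_def
      by (rule jordan_pattern_leading_block[OF less.prems k0 \<open>k \<le> n\<close> chain last])
    also have "\<dots> = jordan_matrix ((k, J $$ (0, 0)) # n_as)"
      unfolding jordan_matrix_Cons J' dim ..
    finally show ?thesis ..
  qed
qed

lemma canonical_jordan_iff_jordan_pattern:
  "canonical_jordan J \<longleftrightarrow> J \<in> carrier_mat (dim_row J) (dim_row J) \<and> jordan_pattern J"
proof
  assume "canonical_jordan J"
  then obtain n_as where "J = jordan_matrix n_as" unfolding canonical_jordan_def by blast
  then show "J \<in> carrier_mat (dim_row J) (dim_row J) \<and> jordan_pattern J"
    using jordan_pattern_jordan_matrix by simp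
next
  assume "J \<in> carrier_mat (dim_row J) (dim_row J) \<and> jordan_pattern J"
  then show "canonical_jordan J"
    unfolding canonical_jordan_def using jordan_pattern_imp_jordan_matrix by blast
qed

lemma jordan_pattern_kron_sum:
  assumes A: "A \<in> carrier_mat M M" and B: "B \<in> carrier_mat m m"
    and pat: "jordan_pattern A" and diag: "diagonal_mat B"
  shows "jordan_pattern (kron_sum A B)"
  unfolding jordan_pattern_def
proof (intro allI impI)
  fix i j assume "i < dim_row (kron_sum A B)" "j < dim_row (kron_sum A B)"
    and nz: "kron_sum A B $$ (i, j) \<noteq> 0"
  then have i: "i < m * M" and j: "j < m * M" using A B by simp_all
  note index = index_kron_sum[OF A B]
  have blk: "i div M = j div M"
  proof (rule ccontr)
    assume "i div M \<noteq> j div M"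
    moreover from this have "B $$ (i div M, j div M) = 0"
      using diag A B less_mult_imp_div_less[OF i] less_mult_imp_div_less[OF j]
      unfolding diagonal_mat_def by auto
    ultimately show False using nz[unfolded index[OF i j]] by simp
  qed
  show "j = i \<or> (j = Suc i \<and> kron_sum A B $$ (i, j) = 1
    \<and> kron_sum A B $$ (i, i) = kron_sum A B $$ (j, j))"
  proof (cases "i mod M = j mod M")
    case True
    then show ?thesis using blk nat_eq_iff_div_mod_eq[of i j M] by simp
  next
    case False
    then have "A $$ (i mod M, j mod M) \<noteq> 0" using nz[unfolded index[OF i j]] blk by simp
    then have jm: "j mod M = Suc (i mod M)" and one: "A $$ (i mod M, j mod M) = 1"
      and diag_eq: "A $$ (i mod M, i mod M) = A $$ (j mod M, j mod M)"
      using jordan_patternD[OF pat, of "i mod M" "j mod M"] less_mult_imp_mod_less[OF i]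
        less_mult_imp_mod_less[OF j] A False by auto
    have "j = i div M * M + j mod M" using blk div_mult_mod_eq[of j M] by simp
    then have "j = Suc i" using jm div_mult_mod_eq[of i M] by linarith
    moreover have "kron_sum A B $$ (i, j) = 1"
      using blk False one by (simp add: index[OF i j])
    moreover have "kron_sum A B $$ (i, i) = kron_sum A B $$ (j, j)"
      using blk diag_eq by (simp add: index[OF i i] index[OF j j])
    ultimately show ?thesis by blast
  qed
qed

lemma jordan_pattern_of_kron_sum:
  fixes A :: "'a::ring_1 mat"
  assumes A: "A \<in> carrier_mat M M" and B: "B \<in> carrier_mat m m" and m: "0 < m"
    and pat: "jordan_pattern (kron_sum A B)"
  shows "jordan_pattern A"
  unfolding jordan_pattern_def
proof (intro allI impI)
  fix x y assume x: "x < dim_row A" and y: "y < dim_row A" and nz: "A $$ (x, y) \<noteq> 0"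
  have "M \<le> m * M" using m by simp
  then have xm: "x < m * M" and ym: "y < m * M" using x y A by (auto intro: less_le_trans)
  have entry: "kron_sum A B $$ (a, b) = A $$ (a, b) + (if a = b then B $$ (0, 0) else 0)"
    if "a < M" "b < M" for a b
    using that index_kron_sum[OF A B, of a b] \<open>M \<le> m * M\<close> by auto
  show "y = x \<or> (y = Suc x \<and> A $$ (x, y) = 1 \<and> A $$ (x, x) = A $$ (y, y))"
  proof (cases "y = x")
    case False
    then show ?thesis
      using jordan_patternD[OF pat, of x y] xm ym nz x y A B
        entry[of x y] entry[of x x] entry[of y y]
      by auto
  qed simp
qed

lemma diagonal_of_jordan_pattern_kron_sum:
  assumes A: "A \<in> carrier_mat M M" and B: "B \<in> carrier_mat m m" and M: "2 \<le> M"
    and pat: "jordan_pattern (kron_sum A B)"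
  shows "diagonal_mat B"
  unfolding diagonal_mat_def
proof (intro allI impI)
  fix i j assume "i < dim_row B" "j < dim_col B" "i \<noteq> j"
  then have i: "i < m" and j: "j < m" and ij: "i \<noteq> j" using B by auto
  have iM: "i * M < m * M" and jM: "j * M < m * M" using i j M by simp_all
  have "kron_sum A B $$ (i * M, j * M) = B $$ (i, j)"
    using index_kron_sum[OF A B iM jM] M ij by simp
  moreover have "j * M \<noteq> i * M" using ij M by simp
  moreover have "j * M \<noteq> Suc (i * M)"
  proof
    assume "j * M = Suc (i * M)"
    then have "(j * M) mod M = Suc (i * M) mod M" by simp
    with M show False by (simp add: mod_Suc)
  qed
  ultimately show "B $$ (i, j) = 0"
    using jordan_patternD[OF pat, of "i * M" "j * M"] iM jM A B by auto
qed

section \<open>Generalized eigenvectors of rank two\<close>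

definition unit_col :: "nat \<Rightarrow> nat \<Rightarrow> 'a::zero_neq_one mat" where
  "unit_col n j = mat n 1 (\<lambda>(i, _). if i = j then 1 else 0)"

lemma unit_col_carrier [simp]: "unit_col n j \<in> carrier_mat n 1"
  unfolding unit_col_def by simp

lemma unit_col_nonzero:
  assumes "j < n"
  shows "(unit_col n j :: 'a::zero_neq_one mat) \<noteq> 0\<^sub>m n 1"
proof
  assume "(unit_col n j :: 'a mat) = 0\<^sub>m n 1"
  then have "(unit_col n j :: 'a mat) $$ (j, 0) = 0\<^sub>m n 1 $$ (j, 0)" by simp
  with assms show False by (simp add: unit_col_def)
qed

lemma mult_unit_col:
  fixes A :: "'a::semiring_1 mat"
  assumes A: "A \<in> carrier_mat r n" and j: "j < n"
  shows "A * unit_col n j = mat r 1 (\<lambda>(i, _). A $$ (i, j))"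
proof (rule eq_matI)
  fix i k assume "i < dim_row (mat r 1 (\<lambda>(i, _). A $$ (i, j)))"
    "k < dim_col (mat r 1 (\<lambda>(i, _). A $$ (i, j)))"
  then have i: "i < r" and k: "k = 0" by auto
  have "(A * unit_col n j) $$ (i, k) = (\<Sum>t<n. A $$ (i, t) * (if t = j then 1 else 0))"
    using A i k by (simp add: unit_col_def scalar_prod_def atLeast0LessThan)
  also have "\<dots> = (\<Sum>t<n. if t = j then A $$ (i, j) else 0)"
    by (rule sum.cong) auto
  also have "\<dots> = A $$ (i, j)"
    using j by simp
  finally show "(A * unit_col n j) $$ (i, k) = mat r 1 (\<lambda>(i, _). A $$ (i, j)) $$ (i, k)"
    using i k by simp
qed (use A in \<open>auto simp: unit_col_def\<close>)

text \<open>Column matrices stand in for vectors, so that Kronecker products apply to them.\<close>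

definition rank2_gen_eigenvector :: "'a::field mat \<Rightarrow> 'a \<Rightarrow> 'a mat \<Rightarrow> bool" where
  "rank2_gen_eigenvector A \<mu> w \<longleftrightarrow> w \<in> carrier_mat (dim_row A) 1
     \<and> char_matrix A \<mu> * (char_matrix A \<mu> * w) = 0\<^sub>m (dim_row A) 1
     \<and> char_matrix A \<mu> * w \<noteq> 0\<^sub>m (dim_row A) 1"

lemma diagonal_mult_index:
  fixes D :: "'a::semiring_1 mat"
  assumes D: "D \<in> carrier_mat n n" "diagonal_mat D" and X: "X \<in> carrier_mat n k"
    and i: "i < n" and j: "j < k"
  shows "(D * X) $$ (i, j) = D $$ (i, i) * X $$ (i, j)"
proof -
  have "(D * X) $$ (i, j) = (\<Sum>t<n. D $$ (i, t) * X $$ (t, j))"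
    using D X i j by (simp add: scalar_prod_def atLeast0LessThan)
  also have "\<dots> = (\<Sum>t<n. if t = i then D $$ (i, i) * X $$ (i, j) else 0)"
    using D i by (intro sum.cong) (auto simp: diagonal_mat_def)
  also have "\<dots> = D $$ (i, i) * X $$ (i, j)" using i by simp
  finally show ?thesis .
qed

lemma diagonal_mult_mult_eq_zero:
  fixes D :: "'a::field mat"
  assumes D: "D \<in> carrier_mat n n" "diagonal_mat D" and X: "X \<in> carrier_mat n k"
    and DDX: "D * (D * X) = 0\<^sub>m n k"
  shows "D * X = 0\<^sub>m n k"
proof (rule eq_matI)
  fix i j assume "i < dim_row (0\<^sub>m n k :: 'a mat)" "j < dim_col (0\<^sub>m n k :: 'a mat)"
  then have i: "i < n" and j: "j < k" by auto
  have "D $$ (i, i) * (D $$ (i, i) * X $$ (i, j)) = (D * (D * X)) $$ (i, j)"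
    using diagonal_mult_index[OF D mult_carrier_mat[OF D(1) X] i j] diagonal_mult_index[OF D X i j]
    by simp
  then show "(D * X) $$ (i, j) = 0\<^sub>m n k $$ (i, j)"
    using DDX diagonal_mult_index[OF D X i j] i j by simp
qed (use D X in auto)

lemma diagonal_char_matrix:
  fixes D :: "'a::field mat"
  assumes "D \<in> carrier_mat n n" "diagonal_mat D"
  shows "diagonal_mat (char_matrix D \<mu>)"
  unfolding diagonal_mat_def
proof (intro allI impI)
  fix i j assume "i < dim_row (char_matrix D \<mu>)" "j < dim_col (char_matrix D \<mu>)" "i \<noteq> j"
  with assms show "char_matrix D \<mu> $$ (i, j) = 0"
    by (simp add: index_char_matrix diagonal_mat_def char_matrix_def)
qed

lemma rank2_gen_eigenvector_not_diagonalizable: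
  fixes A :: "'a::field mat"
  assumes A: "A \<in> carrier_mat n n" and gen: "rank2_gen_eigenvector A \<mu> w"
  shows "\<not> diagonalizable A"
proof
  assume "diagonalizable A"
  then obtain D P Q where wit: "similar_mat_wit A D P Q" and "diagonal_mat D"
    unfolding diagonalizable_def similar_mat_def by blast
  let ?N = "char_matrix A \<mu>" and ?D = "char_matrix D \<mu>"
  have w: "w \<in> carrier_mat n 1" and NNw: "?N * (?N * w) = 0\<^sub>m n 1"
    and Nw: "?N * w \<noteq> 0\<^sub>m n 1"
    using gen A unfolding rank2_gen_eigenvector_def by auto
  note witD = similar_mat_witD2[OF char_matrix_closed[OF A] similar_mat_wit_char_matrix[OF wit]]
  have Dc: "?D \<in> carrier_mat n n" and P: "P \<in> carrier_mat n n" and Q: "Q \<in> carrier_mat n n"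
    and QP: "Q * P = 1\<^sub>m n" and N: "?N = P * ?D * Q"
    using witD by auto
  have diag: "diagonal_mat ?D"
    by (rule diagonal_char_matrix[OF similar_mat_witD2(5)[OF A wit] \<open>diagonal_mat D\<close>])
  have Nv: "?N * v = P * (?D * (Q * v))" if v: "v \<in> carrier_mat n 1" for v
    unfolding N using assoc_mult_mat[OF mult_carrier_mat[OF P Dc] Q v]
      assoc_mult_mat[OF P Dc mult_carrier_mat[OF Q v]] by simp
  define x where "x = Q * w"
  have x: "x \<in> carrier_mat n 1" unfolding x_def using Q w by simp
  have QPv: "Q * (P * v) = v" if "v \<in> carrier_mat n 1" for v
    using assoc_mult_mat[OF Q P that, symmetric] that by (simp add: QP)
  have "?N * (?N * w) = P * (?D * (?D * x))"
    using Nv[OF w] Nv[OF mult_carrier_mat[OF P mult_carrier_mat[OF Dc x]]]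
      QPv[OF mult_carrier_mat[OF Dc x]]
    unfolding x_def by simp
  then have "?D * (?D * x) = Q * 0\<^sub>m n 1"
    using NNw QPv[OF mult_carrier_mat[OF Dc mult_carrier_mat[OF Dc x]]] by simp
  then have "?D * x = 0\<^sub>m n 1"
    using Q by (intro diagonal_mult_mult_eq_zero[OF Dc diag x]) simp
  then show False using Nw Nv[OF w] P unfolding x_def by simp
qed

lemma jordan_pattern_block_start:
  fixes J :: "'a::field mat"
  assumes J: "J \<in> carrier_mat n n" and pat: "jordan_pattern J"
    and c: "Suc c < n" "J $$ (c, Suc c) \<noteq> 0" and start: "\<forall>c'<c. J $$ (c', Suc c') = 0"
  shows "char_matrix J (J $$ (c, c)) * unit_col n (Suc c) = unit_col n c"
    and "char_matrix J (J $$ (c, c)) * unit_col n c = 0\<^sub>m n 1"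
proof -
  define \<mu> where "\<mu> = J $$ (c, c)"
  let ?N = "char_matrix J \<mu>"
  have sup: "J $$ (c, Suc c) = 1" "J $$ (Suc c, Suc c) = \<mu>"
    using jordan_patternD[OF pat, of c "Suc c"] c J unfolding \<mu>_def by auto
  have col_c: "J $$ (i, c) = (if i = c then \<mu> else 0)" if "i < n" for i
  proof (cases "i = c")
    case False
    show ?thesis
    proof (rule ccontr)
      assume "J $$ (i, c) \<noteq> (if i = c then \<mu> else 0)"
      then have "J $$ (i, c) \<noteq> 0" using False by simp
      then have "c = Suc i" using jordan_patternD[OF pat, of i c] that c J False by auto
      then show False using start \<open>J $$ (i, c) \<noteq> 0\<close> by auto
    qed
  qed (simp add: \<mu>_def)
  have col_Suc_c: "J $$ (i, Suc c) = (if i = c then 1 else if i = Suc c then \<mu> else 0)"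
    if "i < n" for i
    using jordan_patternD[OF pat, of i "Suc c"] that c J sup by auto
  have "?N * unit_col n (Suc c) = mat n 1 (\<lambda>(i, _). ?N $$ (i, Suc c))"
    by (rule mult_unit_col[OF char_matrix_closed[OF J] c(1)])
  also have "\<dots> = unit_col n c"
    using J c col_Suc_c by (auto simp: index_char_matrix unit_col_def intro!: eq_matI)
  finally show "char_matrix J (J $$ (c, c)) * unit_col n (Suc c) = unit_col n c"
    unfolding \<mu>_def .
  have "?N * unit_col n c = mat n 1 (\<lambda>(i, _). ?N $$ (i, c))"
    using c(1) by (intro mult_unit_col[OF char_matrix_closed[OF J]]) simp
  also have "\<dots> = 0\<^sub>m n 1"
    using J c col_c by (auto simp: index_char_matrix intro!: eq_matI)
  finally show "char_matrix J (J $$ (c, c)) * unit_col n c = 0\<^sub>m n 1"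
    unfolding \<mu>_def .
qed

lemma jordan_pattern_rank2_gen_eigenvector:
  fixes J :: "'a::field mat"
  assumes J: "J \<in> carrier_mat n n" and pat: "jordan_pattern J" and nd: "\<not> diagonal_mat J"
  shows "\<exists>\<mu> w. rank2_gen_eigenvector J \<mu> w"
proof -
  from nd obtain i j where "i < n" "j < n" "i \<noteq> j" "J $$ (i, j) \<noteq> 0"
    using J unfolding diagonal_mat_def by auto
  then have "\<exists>c. Suc c < n \<and> J $$ (c, Suc c) \<noteq> 0"
    using jordan_patternD[OF pat, of i j] J by auto
  then obtain c where c: "Suc c < n" "J $$ (c, Suc c) \<noteq> 0"
    and least: "\<forall>c'<c. \<not> (Suc c' < n \<and> J $$ (c', Suc c') \<noteq> 0)"
    using exists_least_iff[of "\<lambda>c. Suc c < n \<and> J $$ (c, Suc c) \<noteq> 0"] by blast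
  then have "\<forall>c'<c. J $$ (c', Suc c') = 0" by auto
  note N = jordan_pattern_block_start[OF J pat c this]
  have "rank2_gen_eigenvector J (J $$ (c, c)) (unit_col n (Suc c))"
    unfolding rank2_gen_eigenvector_def
    using J N c unit_col_nonzero[of c n, where 'a = 'a]
      unit_col_carrier[of n "Suc c", where 'a = 'a]
    by simp
  then show ?thesis by blast
qed

lemma upper_triangular_char_matrix_mult_unit_col_0:
  fixes B :: "'a::field mat"
  assumes B: "B \<in> carrier_mat m m" and m: "0 < m" and ut: "upper_triangular B"
  shows "char_matrix B (B $$ (0, 0)) * unit_col m 0 = 0\<^sub>m m 1"
proof -
  have "char_matrix B (B $$ (0, 0)) * unit_col m 0
      = mat m 1 (\<lambda>(i, _). char_matrix B (B $$ (0, 0)) $$ (i, 0))"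
    by (rule mult_unit_col[OF char_matrix_closed[OF B] m])
  also have "\<dots> = 0\<^sub>m m 1"
    using B m ut by (auto simp: index_char_matrix upper_triangular_def intro!: eq_matI)
  finally show ?thesis .
qed

lemma rank2_gen_eigenvector_kron_sum_left:
  fixes A :: "'a::field mat"
  assumes A: "A \<in> carrier_mat M M" and B: "B \<in> carrier_mat m m" and m: "0 < m"
    and ut: "upper_triangular B" and gen: "rank2_gen_eigenvector A \<mu> w"
  shows "rank2_gen_eigenvector (kron_sum A B) (\<mu> + B $$ (0, 0)) (kron (unit_col m 0) w)"
proof -
  let ?E = "unit_col m 0 :: 'a mat" and ?NA = "char_matrix A \<mu>"
  let ?N = "char_matrix (kron_sum A B) (\<mu> + B $$ (0, 0))"
  have w: "w \<in> carrier_mat M 1" and NNw: "?NA * (?NA * w) = 0\<^sub>m M 1"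
    and Nw: "?NA * w \<noteq> 0\<^sub>m M 1"
    using gen A unfolding rank2_gen_eigenvector_def by auto
  have kron_E_zero_iff: "kron ?E Z = 0\<^sub>m (m * M) 1 \<longleftrightarrow> Z = 0\<^sub>m M 1"
    if "Z \<in> carrier_mat M 1" for Z
    using kron_eq_zero_iff[OF unit_col_carrier that] unit_col_nonzero[OF m, where 'a = 'a] by simp
  have N: "?N * kron ?E Z = kron ?E (?NA * Z)" if Z: "Z \<in> carrier_mat M 1" for Z
  proof -
    have "kron (char_matrix B (B $$ (0, 0)) * ?E) Z = 0\<^sub>m (m * M) 1"
      using kron_eq_zero_iff[OF _ Z] upper_triangular_char_matrix_mult_unit_col_0[OF B m ut] by simp
    then show ?thesis
      using kron_sum_mult_kron[OF char_matrix_closed[OF A] char_matrix_closed[OF B]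
          unit_col_carrier Z]
        kron_carrier[OF unit_col_carrier mult_carrier_mat[OF char_matrix_closed[OF A] Z]]
      by (simp add: char_matrix_kron_sum[OF A B])
  qed
  have "kron ?E w \<in> carrier_mat (dim_row (kron_sum A B)) 1"
    using kron_carrier[OF unit_col_carrier w] A B by simp
  moreover have "?N * (?N * kron ?E w) = 0\<^sub>m (dim_row (kron_sum A B)) 1"
    using N[OF w] N[OF mult_carrier_mat[OF char_matrix_closed[OF A] w]] NNw kron_E_zero_iff A B
    by simp
  moreover have "?N * kron ?E w \<noteq> 0\<^sub>m (dim_row (kron_sum A B)) 1"
    using N[OF w] Nw kron_E_zero_iff[OF mult_carrier_mat[OF char_matrix_closed[OF A] w]] A B by simp
  ultimately show ?thesis unfolding rank2_gen_eigenvector_def by blast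
qed

lemma rank2_gen_eigenvector_kron_sum_right:
  fixes A :: "'a::field mat"
  assumes A: "A \<in> carrier_mat M M" and B: "B \<in> carrier_mat m m" and M: "0 < M"
    and ut: "upper_triangular A" and gen: "rank2_gen_eigenvector B \<mu> w"
  shows "rank2_gen_eigenvector (kron_sum A B) (A $$ (0, 0) + \<mu>) (kron w (unit_col M 0))"
proof -
  let ?E = "unit_col M 0 :: 'a mat" and ?NB = "char_matrix B \<mu>"
  let ?N = "char_matrix (kron_sum A B) (A $$ (0, 0) + \<mu>)"
  have w: "w \<in> carrier_mat m 1" and NNw: "?NB * (?NB * w) = 0\<^sub>m m 1"
    and Nw: "?NB * w \<noteq> 0\<^sub>m m 1"
    using gen B unfolding rank2_gen_eigenvector_def by auto
  have kron_E_zero_iff: "kron Z ?E = 0\<^sub>m (m * M) 1 \<longleftrightarrow> Z = 0\<^sub>m m 1"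
    if "Z \<in> carrier_mat m 1" for Z
    using kron_eq_zero_iff[OF that unit_col_carrier] unit_col_nonzero[OF M, where 'a = 'a] by simp
  have N: "?N * kron Z ?E = kron (?NB * Z) ?E" if Z: "Z \<in> carrier_mat m 1" for Z
  proof -
    have "kron Z (char_matrix A (A $$ (0, 0)) * ?E) = 0\<^sub>m (m * M) 1"
      using kron_eq_zero_iff[OF Z] upper_triangular_char_matrix_mult_unit_col_0[OF A M ut] by simp
    then show ?thesis
      using kron_sum_mult_kron[OF char_matrix_closed[OF A] char_matrix_closed[OF B]
          Z unit_col_carrier]
        kron_carrier[OF mult_carrier_mat[OF char_matrix_closed[OF B] Z] unit_col_carrier]
      by (simp add: char_matrix_kron_sum[OF A B])
  qed
  have "kron w ?E \<in> carrier_mat (dim_row (kron_sum A B)) 1"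
    using kron_carrier[OF w unit_col_carrier] A B by simp
  moreover have "?N * (?N * kron w ?E) = 0\<^sub>m (dim_row (kron_sum A B)) 1"
    using N[OF w] N[OF mult_carrier_mat[OF char_matrix_closed[OF B] w]] NNw kron_E_zero_iff A B
    by simp
  moreover have "?N * kron w ?E \<noteq> 0\<^sub>m (dim_row (kron_sum A B)) 1"
    using N[OF w] Nw kron_E_zero_iff[OF mult_carrier_mat[OF char_matrix_closed[OF B] w]] A B by simp
  ultimately show ?thesis unfolding rank2_gen_eigenvector_def by blast
qed

lemma diagonalizable_jordan_pattern_iff:
  fixes J :: "'a::field mat"
  assumes J: "J \<in> carrier_mat n n" and pat: "jordan_pattern J"
  shows "diagonalizable J \<longleftrightarrow> diagonal_mat J"
  using jordan_pattern_rank2_gen_eigenvector[OF J pat] rank2_gen_eigenvector_not_diagonalizable[OF J]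
    similar_mat_refl[OF J]
  unfolding diagonalizable_def by blast

section \<open>Iterated Kronecker sums and products\<close>

lemma prod_atLeastAtMost_1_Suc: "(\<Prod>i\<in>{1..Suc k}. f i) = f (Suc k) * (\<Prod>i\<in>{1..k}. f i)"
  by (simp add: prod.cl_ivl_Suc mult.commute)

lemma prod_atLeastAtMost_ge_2:
  fixes k :: nat
  assumes "\<forall>i\<in>{1..k}. 2 \<le> m i" and "1 \<le> k"
  shows "2 \<le> (\<Prod>i\<in>{1..k}. m i :: nat)"
proof -
  obtain k' where k: "k = Suc k'" using \<open>1 \<le> k\<close> by (cases k) auto
  have "1 \<le> (\<Prod>i\<in>{1..k'}. m i)"
  proof (rule prod_ge_1)
    fix i assume "i \<in> {1..k'}"
    then have "2 \<le> m i" using assms(1) k by auto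
    then show "1 \<le> m i" by simp
  qed
  moreover have "2 \<le> m k" using assms k by auto
  ultimately have "2 * 1 \<le> m k * (\<Prod>i\<in>{1..k'}. m i)" by (intro mult_le_mono)
  then show ?thesis unfolding k prod_atLeastAtMost_1_Suc by simp
qed

lemma kprod_carrier:
  assumes "\<forall>i\<in>{1..k}. U i \<in> carrier_mat (m i) (m i)"
  shows "kprod U k \<in> carrier_mat (\<Prod>i\<in>{1..k}. m i) (\<Prod>i\<in>{1..k}. m i)"
  using assms
proof (induction U k rule: kprod.induct)
  case (3 U k)
  then have "U (Suc (Suc k)) \<in> carrier_mat (m (Suc (Suc k))) (m (Suc (Suc k)))"
    "kprod U (Suc k) \<in> carrier_mat (\<Prod>i\<in>{1..Suc k}. m i) (\<Prod>i\<in>{1..Suc k}. m i)"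
    by auto
  from kron_carrier[OF this] show ?case
    by (simp only: kprod.simps prod_atLeastAtMost_1_Suc[of m "Suc k"])
qed auto

lemma ksum_carrier:
  assumes "\<forall>i\<in>{1..k}. X i \<in> carrier_mat (m i) (m i)"
  shows "ksum X m k \<in> carrier_mat (\<Prod>i\<in>{1..k}. m i) (\<Prod>i\<in>{1..k}. m i)"
  using assms
proof (induction X m k rule: ksum.induct)
  case (3 X m k)
  let ?M = "\<Prod>i\<in>{1..Suc k}. m i"
  from 3 have "X (Suc (Suc k)) \<in> carrier_mat (m (Suc (Suc k))) (m (Suc (Suc k)))"
    "ksum X m (Suc k) \<in> carrier_mat ?M ?M"
    by auto
  from kron_carrier[OF one_carrier_mat this(2)] kron_carrier[OF this(1) one_carrier_mat]
  show ?case
    by (simp only: ksum.simps prod_atLeastAtMost_1_Suc[of m "Suc k"] add_carrier_mat)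
qed auto

lemma ksum_Suc_Suc:
  assumes "\<forall>i\<in>{1..Suc (Suc k)}. X i \<in> carrier_mat (m i) (m i)"
  shows "ksum X m (Suc (Suc k)) = kron_sum (ksum X m (Suc k)) (X (Suc (Suc k)))"
proof -
  have "X (Suc (Suc k)) \<in> carrier_mat (m (Suc (Suc k))) (m (Suc (Suc k)))" using assms by auto
  moreover have "ksum X m (Suc k) \<in> carrier_mat (\<Prod>i\<in>{1..Suc k}. m i) (\<Prod>i\<in>{1..Suc k}. m i)"
    using assms by (intro ksum_carrier) auto
  ultimately show ?thesis by (simp add: kron_sum_def)
qed

lemma kprod_inverse:
  fixes U V :: "nat \<Rightarrow> 'a::comm_semiring_1 mat"
  assumes "\<forall>i\<in>{1..k}. U i \<in> carrier_mat (m i) (m i) \<and> V i \<in> carrier_mat (m i) (m i)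
    \<and> V i * U i = 1\<^sub>m (m i)"
  shows "kprod V k * kprod U k = 1\<^sub>m (\<Prod>i\<in>{1..k}. m i)"
  using assms
proof (induction V k rule: kprod.induct)
  case (3 V k)
  let ?k = "Suc (Suc k)" and ?M = "\<Prod>i\<in>{1..Suc k}. m i"
  have hyps: "\<forall>i\<in>{1..Suc k}. U i \<in> carrier_mat (m i) (m i) \<and> V i \<in> carrier_mat (m i) (m i)
      \<and> V i * U i = 1\<^sub>m (m i)"
    and U: "U ?k \<in> carrier_mat (m ?k) (m ?k)" and V: "V ?k \<in> carrier_mat (m ?k) (m ?k)"
    and VU: "V ?k * U ?k = 1\<^sub>m (m ?k)"
    using 3(2) by auto
  have PU: "kprod U (Suc k) \<in> carrier_mat ?M ?M" using hyps by (intro kprod_carrier) auto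
  have PV: "kprod V (Suc k) \<in> carrier_mat ?M ?M" using hyps by (intro kprod_carrier) auto
  have "kprod V ?k * kprod U ?k = kron (V ?k * U ?k) (kprod V (Suc k) * kprod U (Suc k))"
    by (simp add: kron_mult[OF V PV U PU])
  also have "\<dots> = 1\<^sub>m (\<Prod>i\<in>{1..?k}. m i)"
    unfolding VU 3(1)[OF hyps] kron_one prod_atLeastAtMost_1_Suc[of m "Suc k"] ..
  finally show ?case .
qed auto

lemma ksum_conj:
  fixes S U V :: "nat \<Rightarrow> 'a::comm_semiring_1 mat"
  assumes "\<forall>i\<in>{1..k}. S i \<in> carrier_mat (m i) (m i) \<and> U i \<in> carrier_mat (m i) (m i)
    \<and> V i \<in> carrier_mat (m i) (m i) \<and> V i * U i = 1\<^sub>m (m i)"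
  shows "kprod V k * ksum S m k * kprod U k = ksum (\<lambda>i. V i * S i * U i) m k"
  using assms
proof (induction S m k rule: ksum.induct)
  case (3 S m k)
  let ?k = "Suc (Suc k)" and ?M = "\<Prod>i\<in>{1..Suc k}. m i"
  have hyps: "\<forall>i\<in>{1..Suc k}. S i \<in> carrier_mat (m i) (m i) \<and> U i \<in> carrier_mat (m i) (m i)
      \<and> V i \<in> carrier_mat (m i) (m i) \<and> V i * U i = 1\<^sub>m (m i)"
    and last: "S ?k \<in> carrier_mat (m ?k) (m ?k)" "U ?k \<in> carrier_mat (m ?k) (m ?k)"
      "V ?k \<in> carrier_mat (m ?k) (m ?k)" "V ?k * U ?k = 1\<^sub>m (m ?k)"
    using 3(2) by auto
  have KS: "ksum S m (Suc k) \<in> carrier_mat ?M ?M" using hyps by (intro ksum_carrier) auto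
  have PU: "kprod U (Suc k) \<in> carrier_mat ?M ?M" using hyps by (intro kprod_carrier) auto
  have PV: "kprod V (Suc k) \<in> carrier_mat ?M ?M" using hyps by (intro kprod_carrier) auto
  have QP: "kprod V (Suc k) * kprod U (Suc k) = 1\<^sub>m ?M"
    using hyps by (intro kprod_inverse) auto
  have eqS: "ksum S m ?k = kron_sum (ksum S m (Suc k)) (S ?k)"
    using 3(2) by (intro ksum_Suc_Suc) auto
  have eqJ: "ksum (\<lambda>i. V i * S i * U i) m ?k
      = kron_sum (ksum (\<lambda>i. V i * S i * U i) m (Suc k)) (V ?k * S ?k * U ?k)"
    using 3(2) by (intro ksum_Suc_Suc) auto
  have "kprod V ?k * ksum S m ?k * kprod U ?k
      = kron_sum (kprod V (Suc k) * ksum S m (Suc k) * kprod U (Suc k)) (V ?k * S ?k * U ?k)"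
    unfolding eqS kprod.simps(3) by (rule kron_sum_conj[OF KS PU PV last(1-3) QP last(4)])
  also have "\<dots> = ksum (\<lambda>i. V i * S i * U i) m ?k"
    unfolding eqJ 3(1)[OF hyps] ..
  finally show ?case .
qed auto

lemma ksum_upper_triangular:
  assumes "\<forall>i\<in>{1..k}. J i \<in> carrier_mat (m i) (m i) \<and> upper_triangular (J i)"
  shows "upper_triangular (ksum J m k)"
  using assms
proof (induction J m k rule: ksum.induct)
  case (3 J m k)
  have "ksum J m (Suc (Suc k)) = kron_sum (ksum J m (Suc k)) (J (Suc (Suc k)))"
    using 3(2) by (intro ksum_Suc_Suc) auto
  moreover have "ksum J m (Suc k) \<in> carrier_mat (\<Prod>i\<in>{1..Suc k}. m i) (\<Prod>i\<in>{1..Suc k}. m i)"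
    using 3(2) by (intro ksum_carrier) auto
  ultimately show ?case
    using 3 upper_triangular_kron_sum[of "ksum J m (Suc k)" _ "J (Suc (Suc k))" "m (Suc (Suc k))"]
    by simp
qed auto

lemma ksum_diagonal:
  assumes "\<forall>i\<in>{1..k}. J i \<in> carrier_mat (m i) (m i) \<and> diagonal_mat (J i)"
  shows "diagonal_mat (ksum J m k)"
  using assms
proof (induction J m k rule: ksum.induct)
  case (1 J m)
  show ?case by (simp add: diagonal_mat_def)
next
  case (3 J m k)
  have "ksum J m (Suc (Suc k)) = kron_sum (ksum J m (Suc k)) (J (Suc (Suc k)))"
    using 3(2) by (intro ksum_Suc_Suc) auto
  moreover have "ksum J m (Suc k) \<in> carrier_mat (\<Prod>i\<in>{1..Suc k}. m i) (\<Prod>i\<in>{1..Suc k}. m i)"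
    using 3(2) by (intro ksum_carrier) auto
  ultimately show ?case
    using 3 diagonal_kron_sum[of "ksum J m (Suc k)" _ "J (Suc (Suc k))" "m (Suc (Suc k))"] by simp
qed auto

lemma ksum_jordan_pattern_iff:
  fixes J :: "nat \<Rightarrow> 'a::ring_1 mat"
  assumes "\<forall>i\<in>{1..k}. J i \<in> carrier_mat (m i) (m i) \<and> jordan_pattern (J i) \<and> 2 \<le> m i"
  shows "jordan_pattern (ksum J m k) \<longleftrightarrow> (\<forall>i\<in>{2..k}. diagonal_mat (J i))"
  using assms
proof (induction J m k rule: ksum.induct)
  case (1 J m)
  show ?case by (simp add: jordan_pattern_def)
next
  case (3 J m k)
  let ?k = "Suc (Suc k)" and ?M = "\<Prod>i\<in>{1..Suc k}. m i"
  have K: "ksum J m (Suc k) \<in> carrier_mat ?M ?M" using 3(2) by (intro ksum_carrier) auto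
  have last: "J ?k \<in> carrier_mat (m ?k) (m ?k) \<and> 2 \<le> m ?k" using 3(2) by simp
  then have B: "J ?k \<in> carrier_mat (m ?k) (m ?k)" "0 < m ?k" by auto
  have M: "2 \<le> ?M" using 3(2) by (intro prod_atLeastAtMost_ge_2) auto
  have "ksum J m ?k = kron_sum (ksum J m (Suc k)) (J ?k)"
    using 3(2) by (intro ksum_Suc_Suc) auto
  then have "jordan_pattern (ksum J m ?k)
      \<longleftrightarrow> jordan_pattern (ksum J m (Suc k)) \<and> diagonal_mat (J ?k)"
    using jordan_pattern_kron_sum[OF K B(1)] jordan_pattern_of_kron_sum[OF K B]
      diagonal_of_jordan_pattern_kron_sum[OF K B(1) M] 3(2)
    by auto
  also have "\<dots> \<longleftrightarrow> (\<forall>i\<in>{2..?k}. diagonal_mat (J i))"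
    using 3 by (auto simp: atLeastAtMostSuc_conv)
  finally show ?case .
qed auto

lemma ksum_rank2_gen_eigenvector:
  fixes J :: "nat \<Rightarrow> 'a::field mat"
  assumes "\<forall>i\<in>{1..k}. J i \<in> carrier_mat (m i) (m i) \<and> upper_triangular (J i) \<and> 0 < m i"
    and "\<exists>i\<in>{1..k}. \<exists>\<mu> w. rank2_gen_eigenvector (J i) \<mu> w"
  shows "\<exists>\<mu> w. rank2_gen_eigenvector (ksum J m k) \<mu> w"
  using assms
proof (induction J m k rule: ksum.induct)
  case (3 J m k)
  let ?k = "Suc (Suc k)" and ?M = "\<Prod>i\<in>{1..Suc k}. m i"
  have hyps: "\<forall>i\<in>{1..Suc k}. J i \<in> carrier_mat (m i) (m i) \<and> upper_triangular (J i) \<and> 0 < m i"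
    using 3(2) by auto
  have K: "ksum J m (Suc k) \<in> carrier_mat ?M ?M" using hyps by (intro ksum_carrier) auto
  have B: "J ?k \<in> carrier_mat (m ?k) (m ?k)" "0 < m ?k" "upper_triangular (J ?k)"
    using 3(2) by auto
  have M: "0 < ?M" using hyps by (intro prod_pos) auto
  have eq: "ksum J m ?k = kron_sum (ksum J m (Suc k)) (J ?k)"
    using 3(2) by (intro ksum_Suc_Suc) auto
  show ?case
  proof (cases "\<exists>\<mu> w. rank2_gen_eigenvector (J ?k) \<mu> w")
    case True
    with rank2_gen_eigenvector_kron_sum_right[OF K B(1) M ksum_upper_triangular]
    show ?thesis unfolding eq using hyps by blast
  next
    case False
    obtain i \<mu> w where "i \<in> {1..?k}" "rank2_gen_eigenvector (J i) \<mu> w" using 3(3) by blast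
    with False have "\<exists>i\<in>{1..Suc k}. \<exists>\<mu> w. rank2_gen_eigenvector (J i) \<mu> w"
      by (metis atLeastAtMost_iff le_Suc_eq)
    with 3(1)[OF hyps] rank2_gen_eigenvector_kron_sum_left[OF K B(1,2,3)]
    show ?thesis unfolding eq by blast
  qed
qed auto

lemma ksum_diagonalizable_iff:
  fixes J :: "nat \<Rightarrow> 'a::field mat"
  assumes J: "\<forall>i\<in>{1..k}. J i \<in> carrier_mat (m i) (m i) \<and> jordan_pattern (J i) \<and> 0 < m i"
  shows "diagonalizable (ksum J m k) \<longleftrightarrow> (\<forall>i\<in>{1..k}. diagonal_mat (J i))"
proof
  assume diag: "diagonalizable (ksum J m k)"
  show "\<forall>i\<in>{1..k}. diagonal_mat (J i)"
  proof (rule ccontr)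
    assume "\<not> (\<forall>i\<in>{1..k}. diagonal_mat (J i))"
    then have "\<exists>i\<in>{1..k}. \<exists>\<mu> w. rank2_gen_eigenvector (J i) \<mu> w"
      using J jordan_pattern_rank2_gen_eigenvector by blast
    then obtain \<mu> w where "rank2_gen_eigenvector (ksum J m k) \<mu> w"
      using ksum_rank2_gen_eigenvector[of k J m] J jordan_pattern_upper_triangular by blast
    then show False
      using rank2_gen_eigenvector_not_diagonalizable[OF ksum_carrier] diag J by blast
  qed
next
  assume "\<forall>i\<in>{1..k}. diagonal_mat (J i)"
  then have "diagonal_mat (ksum J m k)" using J by (intro ksum_diagonal) auto
  then show "diagonalizable (ksum J m k)"
    unfolding diagonalizable_def using similar_mat_refl[OF ksum_carrier] J by blast
qed

section \<open>Conjugation by the Jordan bases\<close>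

lemma minv_inverse:
  fixes A :: "'a::field mat"
  assumes A: "A \<in> carrier_mat n n" and inv: "invertible_mat A"
  shows "minv A \<in> carrier_mat n n" "A * minv A = 1\<^sub>m n" "minv A * A = 1\<^sub>m n"
proof -
  from inv A obtain B where AB: "A * B = 1\<^sub>m n" and BA: "B * A = 1\<^sub>m (dim_row B)"
    unfolding invertible_mat_def inverts_mat_def by auto
  then have "B \<in> carrier_mat n n"
    using A by (metis carrier_matD carrier_matI index_mult_mat(2,3) index_one_mat(2,3))
  with A AB BA have "A \<in> Units (ring_mat TYPE('a) n ())"
    unfolding Units_def ring_mat_def by auto
  then obtain B' where "mat_inverse A = Some B'"
    using mat_inverse(1)[OF A] by fastforce
  with mat_inverse(2)[OF A] show "minv A \<in> carrier_mat n n" "A * minv A = 1\<^sub>m n" "minv A * A = 1\<^sub>m n"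
    unfolding minv_def by auto
qed

lemma minv_eqI:
  fixes A :: "'a::field mat"
  assumes A: "A \<in> carrier_mat n n" and B: "B \<in> carrier_mat n n"
    and AB: "A * B = 1\<^sub>m n" and BA: "B * A = 1\<^sub>m n"
  shows "invertible_mat A" "minv A = B"
proof -
  show inv: "invertible_mat A"
    unfolding invertible_mat_def inverts_mat_def using A B AB BA by auto
  note minv = minv_inverse[OF A inv]
  have "minv A = minv A * (A * B)" using minv(1) by (simp add: AB)
  also have "\<dots> = (minv A * A) * B" using A B minv(1) by (simp add: assoc_mult_mat)
  also have "\<dots> = B" using B by (simp add: minv(3))
  finally show "minv A = B" .
qed

lemma similar_mat_conj:
  fixes A :: "'a::semiring_1 mat"
  assumes A: "A \<in> carrier_mat n n" and P: "P \<in> carrier_mat n n" and Q: "Q \<in> carrier_mat n n"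
    and PQ: "P * Q = 1\<^sub>m n" and QP: "Q * P = 1\<^sub>m n"
  shows "similar_mat A (Q * A * P)"
proof (rule similar_matI[where P = P and Q = Q and n = n])
  have "P * (Q * A * P) * Q = (P * Q) * A * (P * Q)"
    using A P Q by (simp add: assoc_mult_mat[of _ n n _ n _ n])
  then show "A = P * (Q * A * P) * Q" using A by (simp add: PQ)
qed (use A P Q PQ QP in auto)

lemma similar_diagonalizable: "similar_mat A B \<Longrightarrow> diagonalizable A \<longleftrightarrow> diagonalizable B"
  unfolding diagonalizable_def using similar_mat_sym similar_mat_trans by blast

lemma ksum_similar_kprod:
  fixes S U :: "nat \<Rightarrow> 'a::field mat"
  assumes "\<forall>k\<in>{1..n}. S k \<in> carrier_mat (m k) (m k) \<and> U k \<in> carrier_mat (m k) (m k)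
    \<and> invertible_mat (U k)"
  shows "invertible_mat (kprod U n)"
    and "minv (kprod U n) * ksum S m n * kprod U n = ksum (\<lambda>k. minv (U k) * S k * U k) m n"
    and "similar_mat (ksum S m n) (ksum (\<lambda>k. minv (U k) * S k * U k) m n)"
proof -
  let ?N = "\<Prod>k\<in>{1..n}. m k" and ?V = "\<lambda>k. minv (U k)"
  have UV: "\<forall>k\<in>{1..n}. S k \<in> carrier_mat (m k) (m k) \<and> U k \<in> carrier_mat (m k) (m k)
      \<and> ?V k \<in> carrier_mat (m k) (m k) \<and> ?V k * U k = 1\<^sub>m (m k) \<and> U k * ?V k = 1\<^sub>m (m k)"
    using assms minv_inverse by blast
  have P: "kprod U n \<in> carrier_mat ?N ?N" using UV by (intro kprod_carrier) auto
  have Q: "kprod ?V n \<in> carrier_mat ?N ?N" using UV by (intro kprod_carrier) auto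
  have "kprod ?V n * kprod U n = 1\<^sub>m ?N" using UV by (intro kprod_inverse) auto
  moreover have "kprod U n * kprod ?V n = 1\<^sub>m ?N" using UV by (intro kprod_inverse) auto
  ultimately have inv: "invertible_mat (kprod U n)" and minv: "minv (kprod U n) = kprod ?V n"
    using minv_eqI[OF P Q] by auto
  show "invertible_mat (kprod U n)" by (rule inv)
  show conj: "minv (kprod U n) * ksum S m n * kprod U n = ksum (\<lambda>k. ?V k * S k * U k) m n"
    unfolding minv using UV by (intro ksum_conj) auto
  have "ksum S m n \<in> carrier_mat ?N ?N" using UV by (intro ksum_carrier) auto
  then show "similar_mat (ksum S m n) (ksum (\<lambda>k. ?V k * S k * U k) m n)"
    unfolding conj[symmetric] using P minv_inverse[OF P inv] by (intro similar_mat_conj) auto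
qed

lemma diagonalizable_iff_diagonal_jordan_form:
  fixes A U :: "'a::field mat"
  assumes A: "A \<in> carrier_mat n n" and U: "U \<in> carrier_mat n n" "invertible_mat U"
    and jordan: "canonical_jordan (minv U * A * U)"
  shows "diagonalizable A \<longleftrightarrow> diagonal_mat (minv U * A * U)"
proof -
  have J: "minv U * A * U \<in> carrier_mat n n" using A U(1) minv_inverse[OF U] by auto
  have "similar_mat A (minv U * A * U)"
    using A U minv_inverse[OF U] by (intro similar_mat_conj) auto
  then show ?thesis
    using similar_diagonalizable diagonalizable_jordan_pattern_iff[OF J]
      jordan[unfolded canonical_jordan_iff_jordan_pattern] by blast
qed

theorem theorem5p3:
  fixes p n :: nat and m :: "nat \<Rightarrow> nat" and l r :: "nat \<Rightarrow> int"
    and U :: "nat \<Rightarrow> 'e::field mat"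
  defines "S \<equiv> (\<lambda>k. Smat (m k) (of_int (l k) :: 'e) (of_int (r k)))"
  defines "J \<equiv> (\<lambda>k. minv (U k) * S k * U k)"
  assumes "prime p" and "CHAR('e) = p"
    and "n \<ge> 2" and "\<forall>k\<in>{1..n}. m k \<ge> 2"
    and "is_splitting_field
           {gpoly (m k) (of_int (l k) :: 'e) (of_int (r k)) | k. k \<in> {1..n}}"
    and "\<forall>k\<in>{1..n}. U k \<in> carrier_mat (m k) (m k) \<and> invertible_mat (U k)"
    and "\<forall>k\<in>{1..n}. canonical_jordan (J k)"
  shows "invertible_mat (kprod U n)
    \<and> minv (kprod U n) * ksum S m n * kprod U n = ksum J m n
    \<and> upper_triangular (ksum J m n)
    \<and> (canonical_jordan (ksum J m n) \<longleftrightarrow> (\<forall>k\<in>{2..n}. diagonalizable (S k)))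
    \<and> (diagonalizable (ksum S m n) \<longleftrightarrow> (\<forall>k\<in>{1..n}. diagonalizable (S k)))"
proof -
  have S: "S k \<in> carrier_mat (m k) (m k)" for k unfolding S_def Smat_def by simp
  have SU: "\<forall>k\<in>{1..n}. S k \<in> carrier_mat (m k) (m k) \<and> U k \<in> carrier_mat (m k) (m k)
      \<and> invertible_mat (U k)"
    using S assms(8) by blast
  have J: "J k \<in> carrier_mat (m k) (m k) \<and> jordan_pattern (J k) \<and> 2 \<le> m k" if "k \<in> {1..n}" for k
    using assms(6,9) SU that canonical_jordan_iff_jordan_pattern[of "J k"] minv_inverse[of "U k" "m k"]
    unfolding J_def by auto
  have "diagonalizable (S k) \<longleftrightarrow> diagonal_mat (J k)" if "k \<in> {1..n}" for k
    using SU assms(9) that diagonalizable_iff_diagonal_jordan_form[of "S k" "m k" "U k"]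
    unfolding J_def by auto
  then have "(\<forall>k\<in>{2..n}. diagonal_mat (J k)) \<longleftrightarrow> (\<forall>k\<in>{2..n}. diagonalizable (S k))"
    and "(\<forall>k\<in>{1..n}. diagonal_mat (J k)) \<longleftrightarrow> (\<forall>k\<in>{1..n}. diagonalizable (S k))"
    by auto
  moreover have "canonical_jordan (ksum J m n) \<longleftrightarrow> (\<forall>k\<in>{2..n}. diagonal_mat (J k))"
    using canonical_jordan_iff_jordan_pattern ksum_jordan_pattern_iff[of n J m] J
      ksum_carrier[of n J m] by auto
  moreover have "diagonalizable (ksum J m n) \<longleftrightarrow> (\<forall>k\<in>{1..n}. diagonal_mat (J k))"
    using J by (intro ksum_diagonalizable_iff) fastforce
  moreover have "upper_triangular (ksum J m n)"
    by (intro ksum_upper_triangular ballI) (simp add: J jordan_pattern_upper_triangular)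
  moreover note ksum_similar_kprod[OF SU, folded J_def]
  ultimately show ?thesis using similar_diagonalizable by blast
qed

end
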